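(* Let $n\ge3$, let $F(x,y)\in\mathbb{Z}[x,y]$ be a binary form of degree $n$ irreducible over $\mathbb{Q}$ with $s+1$ nonzero coefficients and discriminant $D$, and let $h,\kappa,Y_S$ be as in the context. Write $F(x,y)=a\prod_{i=1}^n(x-\alpha_iy)$ and $L_i(x,y)=x-\alpha_i y$. Then for each $i=1,\dots,n$, among the primitive solutions $(x,y)$ of $1\le|F(x,y)|\le h$ with $0<y\le Y_S$ there is at most one with $|L_i(x,y)|<\frac{1}{2Y_S}$.
   Context: $R=n^{800\log^2 n}$; $h$ is a positive integer and $\kappa>1$ an integer with $h\le |D|^{\frac{1}{2(n-1)(2+1/\kappa)}}/\big((3R)^{n/2}(ns)^{2s+n}\big)$; $Y_S=e^6 s(ns)^{2s/n}h^{1/(\kappa n)}$. Here $a$ is the coefficient of $x^n$ and $\alpha_1,\dots,\alpha_n$ are the roots of $F(x,1)$. A primitive solution is a solution $(x,y)\in\mathbb{Z}^2$ with $\gcd(x,y)=1$. *)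

theory Defs
  imports "HOL-Analysis.Analysis" "HOL-Computational_Algebra.Polynomial"
begin

text \<open>A binary form F(x,y) of degree n is represented by its dehomogenisation
  f = F(x,1), an integer polynomial with degree f = n; then
  F(x,y) = sum_{i<=n} coeff f i * x^i * y^(n-i).\<close>
definition binform :: "int poly \<Rightarrow> nat \<Rightarrow> int \<Rightarrow> int \<Rightarrow> int" where
  "binform f n x y = (\<Sum>i\<le>n. coeff f i * x ^ i * y ^ (n - i))"

definition R_const :: "nat \<Rightarrow> real" where
  "R_const n = real n powr (800 * (ln (real n))\<^sup>2)"

definition Y_S :: "nat \<Rightarrow> nat \<Rightarrow> nat \<Rightarrow> nat \<Rightarrow> real" where
  "Y_S n s h \<kappa> = exp 6 * real s * (real n * real s) powr (2 * real s / real n)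
      * real h powr (1 / (real \<kappa> * real n))"

end

theory Submission
  imports Defs
begin

text \<open>Only the approximation to \<open>\<alpha>\<^sub>i\<close> and primitivity matter. If two solutions with
  \<open>0 < y \<le> Y\<close> both satisfy \<open>|x - \<alpha>\<^sub>i y| < 1/(2Y)\<close>, then the integer
  \<open>x\<^sub>1 y\<^sub>2 - x\<^sub>2 y\<^sub>1 = y\<^sub>2 (x\<^sub>1 - \<alpha>\<^sub>i y\<^sub>1) - y\<^sub>1 (x\<^sub>2 - \<alpha>\<^sub>i y\<^sub>2)\<close> has absolute value
  below \<open>1\<close>, so it vanishes and the two primitive pairs coincide.\<close>

lemma cross_product_eq_if_close_to_line:
  fixes \<alpha> :: "'a::real_normed_field" and x1 y1 x2 y2 :: int and Y :: real
  assumes y1: "\<bar>y1\<bar> \<le> Y" and y2: "\<bar>y2\<bar> \<le> Y"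
    and close1: "norm (of_int x1 - \<alpha> * of_int y1) < 1 / (2 * Y)"
    and close2: "norm (of_int x2 - \<alpha> * of_int y2) < 1 / (2 * Y)"
  shows "x1 * y2 = x2 * y1"
proof -
  define u where "u = of_int x1 - \<alpha> * of_int y1"
  define v where "v = of_int x2 - \<alpha> * of_int y2"
  have "1 / (2 * Y) > 0"
    using close1 norm_ge_zero[of "of_int x1 - \<alpha> * of_int y1"] by linarith
  then have Y: "Y > 0"
    by (simp add: zero_less_divide_iff)
  have "(of_int (x1 * y2 - x2 * y1) :: 'a) = u * of_int y2 - v * of_int y1"
    by (simp add: u_def v_def algebra_simps)
  then have "\<bar>real_of_int (x1 * y2 - x2 * y1)\<bar> = norm (u * of_int y2 - v * of_int y1)"
    by (metis norm_of_int)
  also have "\<dots> \<le> norm u * \<bar>y2\<bar> + norm v * \<bar>y1\<bar>"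
    using norm_triangle_ineq4[of "u * of_int y2" "v * of_int y1"] by (simp add: norm_mult)
  also have "\<dots> < 1 / (2 * Y) * Y + 1 / (2 * Y) * Y"
  proof (rule add_less_le_mono)
    show "norm u * \<bar>y2\<bar> < 1 / (2 * Y) * Y"
    proof -
      have "norm u * \<bar>y2\<bar> \<le> norm u * Y"
        using y2 by (intro mult_left_mono) simp_all
      also have "\<dots> < 1 / (2 * Y) * Y"
        using close1 Y unfolding u_def by (intro mult_strict_right_mono)
      finally show ?thesis .
    qed
    show "norm v * \<bar>y1\<bar> \<le> 1 / (2 * Y) * Y"
      using close2 y1 Y unfolding v_def by (intro mult_mono) auto
  qed
  also have "\<dots> = 1"
    using Y by simp
  finally show ?thesis
    by linarith
qed

lemma coprime_pairs_eq_if_cross_product_eq: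
  fixes x1 y1 x2 y2 :: int
  assumes "coprime x1 y1" "coprime x2 y2" "y1 > 0" "y2 > 0"
    and cross: "x1 * y2 = x2 * y1"
  shows "x1 = x2 \<and> y1 = y2"
proof -
  have "y1 dvd y2"
    using assms(1) cross by (metis coprime_commute coprime_dvd_mult_right_iff dvd_triv_right)
  moreover have "y2 dvd y1"
    using assms(2) cross by (metis coprime_commute coprime_dvd_mult_right_iff dvd_triv_right)
  ultimately have "y1 = y2"
    using assms(3,4) by (simp add: zdvd_antisym_nonneg)
  with cross assms(3) show ?thesis
    by simp
qed

theorem lemma4p2:
  fixes f :: "int poly" and n s h \<kappa> :: nat and D :: int and \<alpha> :: "nat \<Rightarrow> complex"
  assumes n3: "n \<ge> 3"
    and deg: "degree f = n"
    and irr: "irreducible (map_poly (of_int :: int \<Rightarrow> rat) f)"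
    and nz: "card {i. i \<le> n \<and> coeff f i \<noteq> 0} = s + 1"
    and roots: "map_poly (of_int :: int \<Rightarrow> complex) f
                  = smult (of_int (lead_coeff f)) (\<Prod>i=1..n. [:- \<alpha> i, 1:])"
    and disc: "of_int D = (of_int (lead_coeff f) :: complex) ^ (2 * n - 2)
                  * (\<Prod>i\<in>{1..n}. \<Prod>j\<in>{i<..n}. (\<alpha> i - \<alpha> j)\<^sup>2)"
    and hpos: "h > 0"
    and kappa: "\<kappa> > 1"
    and hbound: "real h \<le> \<bar>real_of_int D\<bar> powr (1 / (2 * (real n - 1) * (2 + 1 / real \<kappa>)))
                  / ((3 * R_const n) powr (real n / 2) * (real n * real s) ^ (2 * s + n))"
    and i: "i \<in> {1..n}"
  shows "\<forall>x1 y1 x2 y2 :: int.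
           (gcd x1 y1 = 1 \<and> 1 \<le> \<bar>binform f n x1 y1\<bar> \<and> \<bar>binform f n x1 y1\<bar> \<le> int h
              \<and> 0 < y1 \<and> real_of_int y1 \<le> Y_S n s h \<kappa>
              \<and> cmod (of_int x1 - \<alpha> i * of_int y1) < 1 / (2 * Y_S n s h \<kappa>))
         \<and> (gcd x2 y2 = 1 \<and> 1 \<le> \<bar>binform f n x2 y2\<bar> \<and> \<bar>binform f n x2 y2\<bar> \<le> int h
              \<and> 0 < y2 \<and> real_of_int y2 \<le> Y_S n s h \<kappa>
              \<and> cmod (of_int x2 - \<alpha> i * of_int y2) < 1 / (2 * Y_S n s h \<kappa>))
         \<longrightarrow> x1 = x2 \<and> y1 = y2"
proof (intro allI impI, elim conjE)
  fix x1 y1 x2 y2 :: int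
  assume "gcd x1 y1 = 1" "0 < y1" "real_of_int y1 \<le> Y_S n s h \<kappa>"
    "cmod (of_int x1 - \<alpha> i * of_int y1) < 1 / (2 * Y_S n s h \<kappa>)"
    and "gcd x2 y2 = 1" "0 < y2" "real_of_int y2 \<le> Y_S n s h \<kappa>"
    "cmod (of_int x2 - \<alpha> i * of_int y2) < 1 / (2 * Y_S n s h \<kappa>)"
  moreover from this have "x1 * y2 = x2 * y1"
    by (intro cross_product_eq_if_close_to_line[of y1 "Y_S n s h \<kappa>" y2 x1 "\<alpha> i" x2]) auto
  ultimately show "x1 = x2 \<and> y1 = y2"
    by (intro coprime_pairs_eq_if_cross_product_eq) (auto simp: coprime_iff_gcd_eq_1)
qed

end
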